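(* Let $A$ be a connected monounary algebra and $a\in A$ with $A'=\{a\}$. If $A$ contains no cycle and the subalgebra $A\setminus P(a)$ is not isomorphic to $Z$, then there is $B\in\mathbf R(A)\cap\mathcal S^{(1)}$ such that $\mathbf V(A)=\mathbf V(B,E)$.
   Context: A monounary algebra is a pair $(A,f)$ with $A$ a nonempty set and $f:A\to A$; a partial monounary algebra allows $f$ to be partial. Direct products are coordinatewise. It is connected if for all $x,y$ there are $m,n\ge0$ with $f^m(x)=f^n(y)$; it contains a cycle if $f^k(x)=x$ for some $x$, $k\ge1$. A retract of $A$ is a nonempty subalgebra $M$ such that there is an endomorphism $h:A\to M$ with $h|_M=\mathrm{id}$; $\mathbf R(A)$ is the class of algebras isomorphic to a retract of $A$. A retract variety is a class closed under isomorphisms, retracts and direct products; $\mathbf V(\mathcal K)$ is the smallest retract variety containing $\mathcal K$, $\mathbf V(B,E)=\mathbf V(\{B,E\})$. For $x\in A$: $f^{-1}(x)=\{y:f(y)=x\}$, $f^{-n}(x)=\bigcup_{z\in f^{-(n-1)}(x)}f^{-1}(z)$, $P(x)=\{x\}\cup\bigcup_{n\ge1}f^{-n}(x)$, regarded as a partial monounary algebra with $f$ restricted to those $y\in P(x)$ with $f(y)\in P(x)$. $A^{(\infty)}$ is the set of $x\in A$ admitting $x_0=x,x_1,\dots$ with $f(x_n)=x_{n-1}$ for $n\ge1$; $A'=\{x\in A\setminus A^{(\infty)}: f(x)\in A^{(\infty)}\}$. Condition ($\bigstar$) on $(A,f)$: whenever $x_1,x_2,x_3\in A$ with $f(x_1)=f(x_2)=f(x_3)$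 and $P(x_1),P(x_2),P(x_3)$ pairwise isomorphic, then $|\{x_1,x_2,x_3\}|\le2$. $\mathcal U^\bigstar_c$ is the class of connected monounary algebras satisfying ($\bigstar$). $Z=(\mathbb Z,k\mapsto k+1)$; for $n\in\mathbb N$, $\underline n=(\mathbb Z_n,k\mapsto k+1\bmod n)$; $E$ has universe $\mathbb Z\cup\{(k,1):k\in\mathbb N\}$ with $f(k)=k+1$ on $\mathbb Z$, $f((k,1))=(k-1,1)$ for $k>1$, $f((1,1))=0$; $\widehat n$ has universe $\mathbb Z_n\cup\{(k,1):k\in\mathbb N\}$ with $f(k)=k+1\bmod n$ on $\mathbb Z_n$, $f((k,1))=(k-1,1)$ for $k>1$, $f((1,1))=0$. $\mathcal S^{(0)}$ is the class of algebras isomorphic to $Z$, $E$, or to $\underline n$ or $\widehat n$ for some $n\in\mathbb N$; $\mathcal S^{(1)}$ is the class of $A\in\mathcal U^\bigstar_c$ for which there is $a\in A$ with $A'=\{a\}$ and the subalgebra $A\setminus P(a)$ in $\mathcal S^{(0)}$. *)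

theory Defs
  imports "HOL-Library.FuncSet"
begin

text \<open>A monounary algebra is represented by a carrier set S and an operation f
  (only its values on S matter).\<close>

definition is_malg :: "'a set \<Rightarrow> ('a \<Rightarrow> 'a) \<Rightarrow> bool" where
  "is_malg S f \<longleftrightarrow> S \<noteq> {} \<and> (\<forall>x\<in>S. f x \<in> S)"

definition malg_iso :: "'a set \<Rightarrow> ('a \<Rightarrow> 'a) \<Rightarrow> 'b set \<Rightarrow> ('b \<Rightarrow> 'b) \<Rightarrow> bool" where
  "malg_iso S f T g \<longleftrightarrow> (\<exists>h. bij_betw h S T \<and> (\<forall>x\<in>S. h (f x) = g (h x)))"

definition is_retract :: "'a set \<Rightarrow> 'a set \<Rightarrow> ('a \<Rightarrow> 'a) \<Rightarrow> bool" where
  "is_retract M S f \<longleftrightarrow> M \<noteq> {} \<and> M \<subseteq> S \<and> (\<forall>x\<in>M. f x \<in> M) \<and>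
     (\<exists>h. (\<forall>x\<in>S. h x \<in> M \<and> h (f x) = f (h x)) \<and> (\<forall>x\<in>M. h x = x))"

definition in_R :: "'b set \<Rightarrow> ('b \<Rightarrow> 'b) \<Rightarrow> 'a set \<Rightarrow> ('a \<Rightarrow> 'a) \<Rightarrow> bool" where
  "in_R T g S f \<longleftrightarrow> (\<exists>M. is_retract M S f \<and> malg_iso T g M f)"

definition prod_carrier :: "'i set \<Rightarrow> ('i \<Rightarrow> 'd set \<times> ('d \<Rightarrow> 'd)) \<Rightarrow> ('i \<Rightarrow> 'd) set" where
  "prod_carrier I C = PiE I (\<lambda>i. fst (C i))"

definition prod_op :: "'i set \<Rightarrow> ('i \<Rightarrow> 'd set \<times> ('d \<Rightarrow> 'd)) \<Rightarrow> ('i \<Rightarrow> 'd) \<Rightarrow> ('i \<Rightarrow> 'd)" where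
  "prod_op I C = (\<lambda>x. restrict (\<lambda>i. snd (C i) (x i)) I)"

text \<open>Membership in the retract variety V(K): isomorphic to a retract of a direct
  product of members of K (K given as an isomorphism-closed predicate on algebras
  of a fixed type 'd; the index type 'i is fixed by the TYPE argument).\<close>
definition in_V :: "('d set \<Rightarrow> ('d \<Rightarrow> 'd) \<Rightarrow> bool) \<Rightarrow> 'i itself \<Rightarrow> 'c set \<Rightarrow> ('c \<Rightarrow> 'c) \<Rightarrow> bool" where
  "in_V K _ X g \<longleftrightarrow> (\<exists>(I::'i set) C.
      (\<forall>i\<in>I. is_malg (fst (C i)) (snd (C i)) \<and> K (fst (C i)) (snd (C i))) \<and>
      in_R X g (prod_carrier I C) (prod_op I C))"

definition connected_malg :: "'a set \<Rightarrow> ('a \<Rightarrow> 'a) \<Rightarrow> bool" where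
  "connected_malg S f \<longleftrightarrow> (\<forall>x\<in>S. \<forall>y\<in>S. \<exists>m n. (f ^^ m) x = (f ^^ n) y)"

definition has_cycle :: "'a set \<Rightarrow> ('a \<Rightarrow> 'a) \<Rightarrow> bool" where
  "has_cycle S f \<longleftrightarrow> (\<exists>x\<in>S. \<exists>k\<ge>1. (f ^^ k) x = x)"

definition Pset :: "'a set \<Rightarrow> ('a \<Rightarrow> 'a) \<Rightarrow> 'a \<Rightarrow> 'a set" where
  "Pset S f x = {y\<in>S. \<exists>n. (f ^^ n) y = x}"

text \<open>Isomorphism of partial monounary algebras (P, f restricted to P).\<close>
definition partial_iso :: "'a set \<Rightarrow> 'a set \<Rightarrow> ('a \<Rightarrow> 'a) \<Rightarrow> bool" where
  "partial_iso P1 P2 f \<longleftrightarrow> (\<exists>h. bij_betw h P1 P2 \<and>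
     (\<forall>y\<in>P1. (f y \<in> P1 \<longleftrightarrow> f (h y) \<in> P2) \<and> (f y \<in> P1 \<longrightarrow> h (f y) = f (h y))))"

definition inf_part :: "'a set \<Rightarrow> ('a \<Rightarrow> 'a) \<Rightarrow> 'a set" where
  "inf_part S f = {x\<in>S. \<exists>s. s 0 = x \<and> (\<forall>n. s n \<in> S \<and> f (s (Suc n)) = s n)}"

definition prime_part :: "'a set \<Rightarrow> ('a \<Rightarrow> 'a) \<Rightarrow> 'a set" where
  "prime_part S f = {x\<in>S - inf_part S f. f x \<in> inf_part S f}"

definition star_cond :: "'a set \<Rightarrow> ('a \<Rightarrow> 'a) \<Rightarrow> bool" where
  "star_cond S f \<longleftrightarrow> (\<forall>x1\<in>S. \<forall>x2\<in>S. \<forall>x3\<in>S.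
     f x1 = f x2 \<and> f x2 = f x3 \<and>
     partial_iso (Pset S f x1) (Pset S f x2) f \<and>
     partial_iso (Pset S f x1) (Pset S f x3) f \<and>
     partial_iso (Pset S f x2) (Pset S f x3) f \<longrightarrow> card {x1, x2, x3} \<le> 2)"

definition in_Ustar_c :: "'a set \<Rightarrow> ('a \<Rightarrow> 'a) \<Rightarrow> bool" where
  "in_Ustar_c S f \<longleftrightarrow> is_malg S f \<and> connected_malg S f \<and> star_cond S f"

definition Z_op :: "int \<Rightarrow> int" where "Z_op k = k + 1"

text \<open>The algebra E: Inl k stands for k \<in> \<int>, Inr k for (k,1), k \<ge> 1.\<close>
definition E_car :: "(int + nat) set" where
  "E_car = range Inl \<union> Inr ` {1..}"

fun E_op :: "int + nat \<Rightarrow> int + nat" where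
  "E_op (Inl k) = Inl (k + 1)"
| "E_op (Inr k) = (if k > 1 then Inr (k - 1) else Inl 0)"

text \<open>The cycle n (carrier Z_n = {0..<n}).\<close>
definition cyc_op :: "nat \<Rightarrow> nat \<Rightarrow> nat" where
  "cyc_op n k = (k + 1) mod n"

text \<open>The algebra n-hat: Inl k for k \<in> Z_n, Inr k for (k,1), k \<ge> 1.\<close>
definition hat_car :: "nat \<Rightarrow> (nat + nat) set" where
  "hat_car n = Inl ` {0..<n} \<union> Inr ` {1..}"

fun hat_op :: "nat \<Rightarrow> nat + nat \<Rightarrow> nat + nat" where
  "hat_op n (Inl k) = Inl ((k + 1) mod n)"
| "hat_op n (Inr k) = (if k > 1 then Inr (k - 1) else Inl 0)"

definition in_S0 :: "'a set \<Rightarrow> ('a \<Rightarrow> 'a) \<Rightarrow> bool" where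
  "in_S0 S f \<longleftrightarrow> malg_iso S f (UNIV :: int set) Z_op \<or> malg_iso S f E_car E_op \<or>
     (\<exists>n::nat. n \<ge> 1 \<and> (malg_iso S f {0..<n} (cyc_op n) \<or> malg_iso S f (hat_car n) (hat_op n)))"

definition in_S1 :: "'a set \<Rightarrow> ('a \<Rightarrow> 'a) \<Rightarrow> bool" where
  "in_S1 S f \<longleftrightarrow> in_Ustar_c S f \<and>
     (\<exists>a\<in>S. prime_part S f = {a} \<and> in_S0 (S - Pset S f a) f)"

end

theory Submission
  imports Defs
begin

text \<open>
  B keeps from P(a) one representative of each class of bisimilar siblings, chosen top-down
  from a (bisimilarity of the trees of preimages takes the place of the isomorphism
  P(x) \<cong> P(y) of condition (\<bigstar>)), and replaces the infinite part of A by a single copy of Z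
  through f a. Sending the infinite part onto that line by level and P(a) onto the
  representatives is a retraction of A onto B. On the line f is injective, and siblings in the
  tree with isomorphic P-sets are bisimilar, hence the same representative; so B satisfies
  (\<bigstar>), and B - P(a) is the line, so B lies in S(1).

  Since A - P(a), the infinite part, is not Z, two of its elements u1 \<noteq> u2 have the same
  image. A line through u2 together with a tail ending in u1 is a retract of A isomorphic to E,
  the retraction being the map that sends P(u1) to the tail by depth and everything else to
  the line by level. The analogous map for any x1 \<in> A separates x1 from all other points, so
  these maps and the retraction onto B embed A into a product of B and copies of E. The
  embedding has a left inverse homomorphism: follow a point of the product forward until it
  reaches the image of A, then walk back the same number of steps in A along preimages
  bisimilar to its B-coordinate.
\<close>

definition malg_hom :: "'a set \<Rightarrow> ('a \<Rightarrow> 'a) \<Rightarrow> 'b set \<Rightarrow> ('b \<Rightarrow> 'b) \<Rightarrow> ('a \<Rightarrow> 'b) \<Rightarrow> bool" where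
  "malg_hom S f T g h \<longleftrightarrow> (\<forall>x\<in>S. h x \<in> T \<and> h (f x) = g (h x))"

lemma in_R_if_section:
  assumes X: "is_malg X g" and j: "malg_hom X g S f j" and r: "malg_hom S f X g r"
    and rj: "\<forall>y\<in>X. r (j y) = y"
  shows "in_R X g S f"
proof -
  have "is_retract (j ` X) S f"
    unfolding is_retract_def
  proof (intro conjI exI)
    show "j ` X \<noteq> {}" "j ` X \<subseteq> S"
      using X j unfolding is_malg_def malg_hom_def by auto
    show "\<forall>x\<in>j ` X. f x \<in> j ` X"
    proof
      fix x assume "x \<in> j ` X"
      then obtain y where "y \<in> X" "x = j y" by blast
      then have "g y \<in> X" "f x = j (g y)"
        using X j unfolding is_malg_def malg_hom_def by auto
      then show "f x \<in> j ` X" by blast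
    qed
    show "\<forall>x\<in>S. j (r x) \<in> j ` X \<and> j (r (f x)) = f (j (r x))"
      using j r unfolding malg_hom_def by auto
    show "\<forall>x\<in>j ` X. j (r x) = x"
      using rj by auto
  qed
  moreover have "malg_iso X g (j ` X) f"
    unfolding malg_iso_def bij_betw_def
    using j rj inj_on_inverseI[of X r j] unfolding malg_hom_def by auto
  ultimately show ?thesis
    unfolding in_R_def by blast
qed

lemma in_R_imp_section:
  assumes X: "is_malg X g" and R: "in_R X g S f"
  obtains j r where "malg_hom X g S f j" "malg_hom S f X g r" "\<forall>y\<in>X. r (j y) = y"
proof -
  obtain M k where M: "is_retract M S f" and k: "bij_betw k X M" "\<forall>x\<in>X. k (g x) = f (k x)"
    using R unfolding in_R_def malg_iso_def by blast
  obtain h where h: "\<forall>x\<in>S. h x \<in> M \<and> h (f x) = f (h x)" "\<forall>x\<in>M. h x = x"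
    and MS: "M \<subseteq> S"
    using M unfolding is_retract_def by blast
  let ?r = "\<lambda>x. inv_into X k (h x)"
  have "malg_hom X g S f k"
    using k MS unfolding malg_hom_def bij_betw_def by auto
  moreover have "malg_hom S f X g ?r"
    unfolding malg_hom_def
  proof
    fix x assume x: "x \<in> S"
    define y where "y = ?r x"
    have y: "y \<in> X" "k y = h x"
      using h(1) x k(1) unfolding y_def bij_betw_def by (auto simp: inv_into_into f_inv_into_f)
    have "?r (f x) = inv_into X k (k (g y))"
      using h(1) x y k(2) by simp
    also have "\<dots> = g y"
      using X y k(1) unfolding is_malg_def bij_betw_def by auto
    finally show "?r x \<in> X \<and> ?r (f x) = g (?r x)"
      using y y_def by simp
  qed
  moreover have "\<forall>y\<in>X. ?r (k y) = y"
    using k(1) h(2) unfolding bij_betw_def by auto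
  ultimately show ?thesis
    using that by blast
qed

lemma in_R_imp_in_V:
  fixes A :: "'a set" and X :: "'b set"
  assumes A: "is_malg A f" and X: "is_malg X g" and R: "in_R X g A f"
  shows "in_V (\<lambda>(S :: 'a set) h. malg_iso S h A f) TYPE('i) X g"
proof -
  define i0 :: 'i where "i0 = undefined"
  define C :: "'i \<Rightarrow> 'a set \<times> ('a \<Rightarrow> 'a)" where "C = (\<lambda>_. (A, f))"
  obtain j r where j: "malg_hom X g A f j" and r: "malg_hom A f X g r" and rj: "\<forall>y\<in>X. r (j y) = y"
    using in_R_imp_section[OF X R] by blast
  let ?diag = "\<lambda>x. restrict (\<lambda>_. x) {i0}"
  have "malg_hom X g (prod_carrier {i0} C) (prod_op {i0} C) (\<lambda>y. ?diag (j y))"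
    using j unfolding malg_hom_def prod_carrier_def prod_op_def C_def by auto
  moreover have "malg_hom (prod_carrier {i0} C) (prod_op {i0} C) X g (\<lambda>p. r (p i0))"
    using r unfolding malg_hom_def prod_carrier_def prod_op_def C_def by auto
  ultimately have "in_R X g (prod_carrier {i0} C) (prod_op {i0} C)"
    by (rule in_R_if_section[OF X]) (use rj in auto)
  moreover have "\<forall>i\<in>{i0}. is_malg (fst (C i)) (snd (C i)) \<and> malg_iso (fst (C i)) (snd (C i)) A f"
    using A unfolding C_def malg_iso_def by (auto intro: exI[of _ id])
  ultimately show ?thesis
    unfolding in_V_def by blast
qed

lemma malg_iso_inj_image:
  assumes "inj_on h S" and "\<forall>x\<in>S. h (f x) = g (h x)"
  shows "malg_iso S f (h ` S) g"
  using assms unfolding malg_iso_def bij_betw_def by blast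

lemma E_op_closed: "y \<in> E_car \<Longrightarrow> E_op y \<in> E_car"
  unfolding E_car_def by (cases y) auto

lemma is_malg_E: "is_malg E_car E_op"
  using E_op_closed unfolding is_malg_def E_car_def by blast

lemma Pset_self: "x \<in> S \<Longrightarrow> x \<in> Pset S f x"
  unfolding Pset_def by (auto intro: exI[of _ 0])

lemma Pset_preimage:
  assumes "y \<in> Pset S f x" "c \<in> S" "f c = y"
  shows "c \<in> Pset S f x"
proof -
  obtain n where "(f ^^ n) y = x"
    using assms(1) unfolding Pset_def by blast
  then have "(f ^^ Suc n) c = x"
    using assms(3) by (simp add: funpow_swap1)
  then show ?thesis
    using assms(2) unfolding Pset_def by blast
qed

lemma Pset_f:
  assumes "\<forall>z\<in>S. f z \<in> S" "y \<in> Pset S f x" "y \<noteq> x"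
  shows "f y \<in> Pset S f x"
proof -
  obtain n where n: "(f ^^ n) y = x" "y \<in> S"
    using assms(2) unfolding Pset_def by blast
  with assms(3) obtain m where "n = Suc m"
    by (cases n) auto
  then have "(f ^^ m) (f y) = x"
    using n by (simp add: funpow_swap1)
  then show ?thesis
    using n assms(1) unfolding Pset_def by blast
qed

lemma inj_on_funpow:
  assumes "inj_on f S" "f ` S \<subseteq> S"
  shows "inj_on (f ^^ k) S"
proof (induction k)
  case (Suc k)
  then have "inj_on (f ^^ k \<circ> f) S"
    using comp_inj_on[OF assms(1)] inj_on_subset assms(2) by blast
  then show ?case
    by (simp only: funpow_Suc_right)
qed simp

lemma has_cycle_mono: "T \<subseteq> S \<Longrightarrow> has_cycle T f \<Longrightarrow> has_cycle S f"
  unfolding has_cycle_def by blast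

lemma acyclic_funpow_inj:
  assumes "\<not> has_cycle S f" "\<forall>z\<in>S. f z \<in> S" "x \<in> S" "(f ^^ m) x = (f ^^ n) x"
  shows "m = n"
proof -
  have "(f ^^ m) x \<noteq> (f ^^ n) x" if "m < n" for m n
  proof
    assume eq: "(f ^^ m) x = (f ^^ n) x"
    have "(f ^^ m) x \<in> S"
      using assms(2,3) by (induction m) auto
    moreover have "(f ^^ (n - m)) ((f ^^ m) x) = (f ^^ (n - m + m)) x"
      by (simp add: funpow_add)
    then have "(f ^^ (n - m)) ((f ^^ m) x) = (f ^^ m) x"
      using eq that by simp
    moreover have "n - m \<ge> 1"
      using that by simp
    ultimately show False
      using assms(1) unfolding has_cycle_def by blast
  qed
  then show ?thesis
    using assms(4) by (metis linorder_neqE_nat)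
qed

lemma acyclic_f_notin_Pset:
  assumes "\<not> has_cycle S f" "x \<in> S"
  shows "f x \<notin> Pset S f x"
proof
  assume "f x \<in> Pset S f x"
  then obtain n where "(f ^^ Suc n) x = x"
    unfolding Pset_def by (auto simp: funpow_swap1)
  moreover have "Suc n \<ge> 1"
    by simp
  ultimately show False
    using assms unfolding has_cycle_def by blast
qed

section \<open>Bisimilarity of preimage trees\<close>

definition bisimulation :: "'a set \<Rightarrow> ('a \<Rightarrow> 'a) \<Rightarrow> ('a \<Rightarrow> 'a \<Rightarrow> bool) \<Rightarrow> bool" where
  "bisimulation S f R \<longleftrightarrow> (\<forall>x y. R x y \<longrightarrow>
     (\<forall>c\<in>S. f c = x \<longrightarrow> (\<exists>d\<in>S. f d = y \<and> R c d)) \<and>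
     (\<forall>d\<in>S. f d = y \<longrightarrow> (\<exists>c\<in>S. f c = x \<and> R c d)))"

definition bisimilar :: "'a set \<Rightarrow> ('a \<Rightarrow> 'a) \<Rightarrow> 'a \<Rightarrow> 'a \<Rightarrow> bool" where
  "bisimilar S f x y \<longleftrightarrow> (\<exists>R. bisimulation S f R \<and> R x y)"

lemma bisimilar_refl: "bisimilar S f x x"
  unfolding bisimilar_def bisimulation_def by (intro exI[of _ "(=)"]) blast

lemma bisimilar_sym:
  assumes "bisimilar S f x y"
  shows "bisimilar S f y x"
proof -
  obtain R where "bisimulation S f R" "R x y"
    using assms unfolding bisimilar_def by blast
  then have "bisimulation S f R\<inverse>\<inverse>" "R\<inverse>\<inverse> y x"
    unfolding bisimulation_def by auto
  then show ?thesis
    unfolding bisimilar_def by blast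
qed

lemma bisimulation_preimage:
  assumes "bisimulation S f R" "R x y"
  shows "c \<in> S \<Longrightarrow> f c = x \<Longrightarrow> \<exists>d\<in>S. f d = y \<and> R c d"
    and "d \<in> S \<Longrightarrow> f d = y \<Longrightarrow> \<exists>c\<in>S. f c = x \<and> R c d"
  using assms unfolding bisimulation_def by blast+

lemma bisimulationI_sym:
  assumes "\<And>u v. R u v \<Longrightarrow> R v u"
    and "\<And>u v c. R u v \<Longrightarrow> c \<in> S \<Longrightarrow> f c = u \<Longrightarrow> \<exists>d\<in>S. f d = v \<and> R c d"
  shows "bisimulation S f R"
  unfolding bisimulation_def
proof (intro allI impI conjI ballI)
  fix u v assume "R u v"
  show "\<exists>d\<in>S. f d = v \<and> R c d" if "c \<in> S" "f c = u" for c
    using assms(2)[OF \<open>R u v\<close> that] .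
  show "\<exists>c\<in>S. f c = u \<and> R c d" if d: "d \<in> S" "f d = v" for d
  proof -
    obtain c where "c \<in> S" "f c = u" "R d c"
      using assms(2)[OF assms(1)[OF \<open>R u v\<close>] d] by blast
    then show ?thesis
      using assms(1)[OF \<open>R d c\<close>] by blast
  qed
qed

lemma bisimilar_trans:
  assumes "bisimilar S f x y" "bisimilar S f y z"
  shows "bisimilar S f x z"
proof -
  obtain R Q where R: "bisimulation S f R" "R x y" and Q: "bisimulation S f Q" "Q y z"
    using assms unfolding bisimilar_def by blast
  have "bisimulation S f (R OO Q)"
    unfolding bisimulation_def
  proof (intro allI impI conjI ballI)
    fix u w assume "(R OO Q) u w"
    then obtain v where v: "R u v" "Q v w" by blast
    show "\<exists>e\<in>S. f e = w \<and> (R OO Q) c e" if "c \<in> S" "f c = u" for c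
      using bisimulation_preimage(1)[OF R(1) v(1) that] bisimulation_preimage(1)[OF Q(1) v(2)]
      by blast
    show "\<exists>c\<in>S. f c = u \<and> (R OO Q) c e" if "e \<in> S" "f e = w" for e
      using bisimulation_preimage(2)[OF Q(1) v(2) that] bisimulation_preimage(2)[OF R(1) v(1)]
      by blast
  qed
  then show ?thesis
    using R(2) Q(2) unfolding bisimilar_def by blast
qed

lemma bisimilar_preimage:
  "bisimilar S f x y \<Longrightarrow> c \<in> S \<Longrightarrow> f c = x \<Longrightarrow> \<exists>d\<in>S. f d = y \<and> bisimilar S f c d"
  unfolding bisimilar_def bisimulation_def by blast

lemma bisimilar_preimage':
  "bisimilar S f x y \<Longrightarrow> d \<in> S \<Longrightarrow> f d = y \<Longrightarrow> \<exists>c\<in>S. f c = x \<and> bisimilar S f c d"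
  using bisimilar_preimage bisimilar_sym by metis

text \<open>x is the only element of P(x) whose image leaves P(x), so a partial isomorphism
  P(x) \<cong> P(y) maps x to y.\<close>

lemma partial_iso_Pset_root:
  assumes closed: "\<forall>z\<in>S. f z \<in> S" and acyclic: "\<not> has_cycle S f" and "y \<in> S"
    and h: "bij_betw h (Pset S f x) (Pset S f y)"
    and hf: "\<forall>z\<in>Pset S f x. f z \<in> Pset S f x \<longleftrightarrow> f (h z) \<in> Pset S f y"
  shows "h x = y"
proof -
  obtain z where z: "z \<in> Pset S f x" "h z = y"
    using bij_betw_imp_surj_on[OF h] Pset_self[of y S f] \<open>y \<in> S\<close> by (metis imageE)
  have "f (h z) \<notin> Pset S f y"
    using z(2) acyclic_f_notin_Pset[OF acyclic \<open>y \<in> S\<close>] by simp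
  then have "f z \<notin> Pset S f x"
    using hf z(1) by blast
  then have "z = x"
    using Pset_f[OF closed z(1)] by blast
  then show ?thesis
    using z(2) by simp
qed

lemma partial_iso_Pset_imp_bisimilar:
  assumes closed: "\<forall>z\<in>S. f z \<in> S" and acyclic: "\<not> has_cycle S f"
    and "x \<in> S" "y \<in> S" and "partial_iso (Pset S f x) (Pset S f y) f"
  shows "bisimilar S f x y"
proof -
  define P Q where "P = Pset S f x" and "Q = Pset S f y"
  obtain h where h: "bij_betw h P Q"
    and hf: "\<forall>z\<in>P. (f z \<in> P \<longleftrightarrow> f (h z) \<in> Q) \<and> (f z \<in> P \<longrightarrow> h (f z) = f (h z))"
    using assms(5) unfolding partial_iso_def P_def Q_def by blast
  have "bisimulation S f (\<lambda>u v. u \<in> P \<and> h u = v)"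
    unfolding bisimulation_def
  proof (intro allI impI conjI ballI)
    fix u v assume uv: "u \<in> P \<and> h u = v"
    show "\<exists>d\<in>S. f d = v \<and> c \<in> P \<and> h c = d" if "c \<in> S" "f c = u" for c
    proof -
      have "c \<in> P"
        using Pset_preimage[of u S f x c] uv that unfolding P_def by blast
      then have "h c \<in> Q" "f (h c) = v"
        using h hf uv that unfolding bij_betw_def by auto
      then show ?thesis
        using \<open>c \<in> P\<close> unfolding Q_def Pset_def by blast
    qed
    show "\<exists>c\<in>S. f c = u \<and> c \<in> P \<and> h c = d" if "d \<in> S" "f d = v" for d
    proof -
      have "v \<in> Q"
        using h uv unfolding bij_betw_def by blast
      then have "d \<in> Q"
        using Pset_preimage[of v S f y d] that unfolding Q_def by blast
      then obtain c where c: "c \<in> P" "h c = d"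
        using h unfolding bij_betw_def by blast
      then have "f c \<in> P" "h (f c) = h u"
        using hf \<open>d \<in> Q\<close> \<open>v \<in> Q\<close> uv that by auto
      then have "f c = u"
        using h uv c unfolding bij_betw_def inj_on_def by blast
      then show ?thesis
        using c unfolding P_def Pset_def by blast
    qed
  qed
  moreover have "h x = y"
    using partial_iso_Pset_root[OF closed acyclic \<open>y \<in> S\<close>] h hf unfolding P_def Q_def by blast
  ultimately show ?thesis
    using Pset_self[OF \<open>x \<in> S\<close>] unfolding bisimilar_def P_def by blast
qed

lemma bisimilar_lift:
  assumes "B \<subseteq> A" "T \<subseteq> B"
    and T_preimage: "\<forall>t\<in>T. \<forall>c\<in>B. f c = t \<longrightarrow> c \<in> T"
    and T_copy: "\<forall>t\<in>T. \<forall>c\<in>A. f c = t \<longrightarrow> (\<exists>c'\<in>B. f c' = t \<and> bisimilar A f c c')"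
    and "x \<in> T" "y \<in> T" "bisimilar B f x y"
  shows "bisimilar A f x y"
proof -
  define R where "R u v \<longleftrightarrow> (\<exists>u'\<in>T. \<exists>v'\<in>T.
    bisimilar A f u u' \<and> bisimilar B f u' v' \<and> bisimilar A f v' v)" for u v
  have "bisimulation A f R"
  proof (rule bisimulationI_sym)
    show "R v u" if "R u v" for u v
      using that bisimilar_sym unfolding R_def by metis
    fix u v c assume "R u v" and c0: "c \<in> A" "f c = u"
    then obtain u' v' where uv: "u' \<in> T" "v' \<in> T" "bisimilar A f u u'"
      "bisimilar B f u' v'" "bisimilar A f v' v"
      unfolding R_def by blast
    obtain c1 where c1: "c1 \<in> A" "f c1 = u'" "bisimilar A f c c1"
      using bisimilar_preimage[OF uv(3) c0] by blast
    obtain c2 where c2: "c2 \<in> B" "f c2 = u'" "bisimilar A f c1 c2"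
      using T_copy uv(1) c1 by blast
    obtain d2 where d2: "d2 \<in> B" "f d2 = v'" "bisimilar B f c2 d2"
      using bisimilar_preimage[OF uv(4) c2(1,2)] by blast
    obtain d where d: "d \<in> A" "f d = v" "bisimilar A f d2 d"
      using bisimilar_preimage[OF uv(5)] d2 \<open>B \<subseteq> A\<close> by blast
    have "c2 \<in> T" "d2 \<in> T"
      using T_preimage uv(1,2) c2 d2 by blast+
    moreover have "bisimilar A f c c2"
      using bisimilar_trans[OF c1(3) c2(3)] .
    ultimately show "\<exists>d\<in>A. f d = v \<and> R c d"
      using d2(3) d unfolding R_def by blast
  qed
  moreover have "R x y"
    using assms(5-7) bisimilar_refl[of A f] unfolding R_def by blast
  ultimately show ?thesis
    unfolding bisimilar_def by blast
qed

lemma inf_partI: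
  assumes "s 0 = x" "\<forall>n. s n \<in> S \<and> f (s (Suc n)) = s n"
  shows "x \<in> inf_part S f"
  using assms unfolding inf_part_def by blast

lemma inf_part_backward_seq:
  assumes "x \<in> inf_part S f"
  obtains s where "s 0 = x" "\<forall>n. s n \<in> inf_part S f \<and> f (s (Suc n)) = s n"
proof -
  obtain s where s: "s 0 = x" "\<forall>n. s n \<in> S \<and> f (s (Suc n)) = s n"
    using assms unfolding inf_part_def by blast
  have "s n \<in> inf_part S f" for n
    by (rule inf_partI[of "\<lambda>k. s (n + k)"]) (use s in auto)
  then show ?thesis
    using that s by blast
qed

lemma inf_part_preimage: "x \<in> inf_part S f \<Longrightarrow> \<exists>c\<in>inf_part S f. f c = x"
  by (metis inf_part_backward_seq)

lemma inf_part_subset: "inf_part S f \<subseteq> S"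
  unfolding inf_part_def by blast

lemma inf_part_mono: "T \<subseteq> S \<Longrightarrow> inf_part T f \<subseteq> inf_part S f"
  unfolding inf_part_def by blast

lemma inf_part_f:
  assumes "\<forall>z\<in>S. f z \<in> S" "x \<in> inf_part S f"
  shows "f x \<in> inf_part S f"
proof -
  obtain s where s: "s 0 = x" "\<forall>n. s n \<in> S \<and> f (s (Suc n)) = s n"
    using assms(2) unfolding inf_part_def by blast
  show ?thesis
    by (rule inf_partI[of "case_nat (f x) s"]) (use s assms(1) in \<open>auto split: nat.split\<close>)
qed

lemma inf_part_funpow: "\<forall>z\<in>S. f z \<in> S \<Longrightarrow> x \<in> inf_part S f \<Longrightarrow> (f ^^ n) x \<in> inf_part S f"
  by (induction n) (auto simp: inf_part_f)

lemma funpow_backward_seq: "\<forall>n. f (s (Suc n)) = s n \<Longrightarrow> (f ^^ n) (s n) = s 0"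
  by (induction n) (auto simp: funpow_swap1)

definition zline :: "('a \<Rightarrow> 'a) \<Rightarrow> (nat \<Rightarrow> 'a) \<Rightarrow> int \<Rightarrow> 'a" where
  "zline f s k = (if 0 \<le> k then (f ^^ nat k) (s 0) else s (nat (- k)))"

lemma zline_succ:
  assumes "\<forall>n. f (s (Suc n)) = s n"
  shows "zline f s (k + 1) = f (zline f s k)"
proof (cases "0 \<le> k")
  case True
  then show ?thesis
    unfolding zline_def by (simp add: nat_add_distrib)
next
  case False
  then have "k = -1 \<or> nat (- k) = Suc (nat (- (k + 1)))"
    by linarith
  then show ?thesis
    using False assms unfolding zline_def by auto
qed

lemma zline_in:
  assumes "\<forall>z\<in>T. f z \<in> T" "\<forall>n. s n \<in> T"
  shows "zline f s k \<in> T"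
proof -
  have "(f ^^ n) (s 0) \<in> T" for n
    using assms by (induction n) auto
  then show ?thesis
    using assms unfolding zline_def by auto
qed

section \<open>Connected acyclic algebras\<close>

locale connected_acyclic =
  fixes A :: "'a set" and f :: "'a \<Rightarrow> 'a"
  assumes malg: "is_malg A f"
    and connected: "connected_malg A f"
    and acyclic: "\<not> has_cycle A f"
begin

lemma A_closed: "\<forall>z\<in>A. f z \<in> A"
  using malg unfolding is_malg_def by blast

lemma f_in: "x \<in> A \<Longrightarrow> f x \<in> A"
  using A_closed by blast

lemma inf_part_in_A: "x \<in> inf_part A f \<Longrightarrow> x \<in> A"
  unfolding inf_part_def by blast

lemma funpow_in: "x \<in> A \<Longrightarrow> (f ^^ n) x \<in> A"
  by (induction n) (auto simp: f_in)

lemma funpow_inj: "x \<in> A \<Longrightarrow> (f ^^ m) x = (f ^^ n) x \<Longrightarrow> m = n"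
  using acyclic_funpow_inj[OF acyclic A_closed] .

text \<open>The height of x relative to b; it is well defined because the algebra is connected and
  has no cycle.\<close>

definition level :: "'a \<Rightarrow> 'a \<Rightarrow> int" where
  "level b x = (SOME d. \<exists>m n. (f ^^ m) x = (f ^^ n) b \<and> d = int n - int m)"

lemma level_eq:
  assumes "b \<in> A" "x \<in> A" "(f ^^ m) x = (f ^^ n) b"
  shows "level b x = int n - int m"
proof -
  have unique: "int n' - int m' = int n - int m" if "(f ^^ m') x = (f ^^ n') b" for m' n'
  proof -
    have "(f ^^ (m + n')) b = (f ^^ m) ((f ^^ m') x)"
      using that by (simp add: funpow_add)
    also have "\<dots> = (f ^^ m') ((f ^^ m) x)"
      by (metis funpow_add add.commute comp_apply)
    also have "\<dots> = (f ^^ (m' + n)) b"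
      using assms(3) by (simp add: funpow_add)
    finally have "m + n' = m' + n"
      using funpow_inj[OF assms(1)] by blast
    then show ?thesis
      by simp
  qed
  have "\<exists>m' n'. (f ^^ m') x = (f ^^ n') b \<and> level b x = int n' - int m'"
    unfolding level_def by (rule someI_ex) (use assms(3) in blast)
  then show ?thesis
    using unique by auto
qed

lemma level_exists: "b \<in> A \<Longrightarrow> x \<in> A \<Longrightarrow> \<exists>m n. (f ^^ m) x = (f ^^ n) b"
  using connected unfolding connected_malg_def by blast

lemma level_self: "b \<in> A \<Longrightarrow> level b b = 0"
  using level_eq[of b b 0 0] by simp

lemma level_f:
  assumes "b \<in> A" "x \<in> A"
  shows "level b (f x) = level b x + 1"
proof -
  obtain m n where mn: "(f ^^ m) x = (f ^^ n) b"
    using level_exists assms by blast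
  then have "(f ^^ m) (f x) = (f ^^ Suc n) b"
    by (metis funpow_Suc_right funpow_swap1 comp_apply)
  from level_eq[OF assms(1) f_in[OF assms(2)] this] show ?thesis
    using level_eq[OF assms mn] by simp
qed

lemma level_funpow: "b \<in> A \<Longrightarrow> x \<in> A \<Longrightarrow> level b ((f ^^ k) x) = level b x + int k"
  by (induction k) (auto simp: level_f funpow_in)

lemma level_common_iterate:
  assumes "b \<in> A" "x \<in> A" "y \<in> A" "level b x = level b y"
  shows "\<exists>k. (f ^^ k) x = (f ^^ k) y"
proof -
  obtain m n where mn: "(f ^^ m) x = (f ^^ n) y"
    using connected assms(2,3) unfolding connected_malg_def by blast
  then have "level b x + int m = level b y + int n"
    using level_funpow assms by metis
  then show ?thesis
    using mn assms(4) by auto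
qed

lemma level_zline:
  assumes "b \<in> A" "\<forall>n. s n \<in> A" "\<forall>n. f (s (Suc n)) = s n"
  shows "level b (zline f s k) = level b (s 0) + k"
proof (cases "0 \<le> k")
  case True
  then show ?thesis
    unfolding zline_def using level_funpow assms by simp
next
  case False
  have "level b (s 0) = level b (s (nat (- k))) + int (nat (- k))"
    using level_funpow[OF assms(1)] assms(2) funpow_backward_seq[OF assms(3)] by metis
  then show ?thesis
    unfolding zline_def using False by simp
qed

lemma level_Pset:
  assumes "x1 \<in> A" "x \<in> A" "(f ^^ k) x = x1"
  shows "level (f x1) x = - int k - 1"
  using level_funpow[OF f_in[OF assms(1)] assms(2), of k] level_f[OF f_in[OF assms(1)] assms(1)]
    level_self[OF f_in[OF assms(1)]] assms(3) by simp

definition to_E :: "'a \<Rightarrow> 'a \<Rightarrow> int + nat" where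
  "to_E x1 x = (if x \<in> Pset A f x1 then Inr (nat (- level (f x1) x)) else Inl (level (f x1) x))"

lemma to_E_in_E:
  assumes "x1 \<in> A" "x \<in> A"
  shows "to_E x1 x \<in> E_car"
proof (cases "x \<in> Pset A f x1")
  case True
  then obtain k where "(f ^^ k) x = x1"
    unfolding Pset_def by blast
  then show ?thesis
    using True level_Pset assms unfolding to_E_def E_car_def by auto
next
  case False
  then show ?thesis
    unfolding to_E_def E_car_def by auto
qed

lemma to_E_f:
  assumes "x1 \<in> A" "x \<in> A"
  shows "to_E x1 (f x) = E_op (to_E x1 x)"
proof (cases "x \<in> Pset A f x1")
  case True
  then obtain k where k: "(f ^^ k) x = x1"
    unfolding Pset_def by blast
  show ?thesis
  proof (cases "x = x1")
    case True
    then have "f x \<notin> Pset A f x1"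
      using acyclic_f_notin_Pset[OF acyclic assms(1)] by simp
    then show ?thesis
      using True assms level_self[OF f_in] level_Pset[of x1 x1 0]
      unfolding to_E_def by (simp add: Pset_self)
  next
    case False
    then have "f x \<in> Pset A f x1"
      using Pset_f[OF A_closed True] by blast
    moreover have "level (f x1) (f x) = level (f x1) x + 1"
      using level_f f_in assms by blast
    moreover have "k \<noteq> 0"
      using k False by (metis funpow_0)
    moreover have "level (f x1) x = - int k - 1"
      using level_Pset[OF assms k] .
    ultimately show ?thesis
      using True unfolding to_E_def by (simp add: nat_diff_distrib)
  qed
next
  case False
  then have "f x \<notin> Pset A f x1"
    using Pset_preimage[of "f x" A f x1 x] assms(2) by blast
  then show ?thesis
    using False level_f f_in assms unfolding to_E_def by simp
qed

lemma malg_hom_to_E: "x1 \<in> A \<Longrightarrow> malg_hom A f E_car E_op (to_E x1)"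
  unfolding malg_hom_def using to_E_in_E to_E_f by blast

lemma to_E_eq_Inr_1_iff:
  assumes "x1 \<in> A" "x \<in> A"
  shows "to_E x1 x = Inr 1 \<longleftrightarrow> x = x1"
proof
  assume *: "to_E x1 x = Inr 1"
  then have "x \<in> Pset A f x1"
    unfolding to_E_def by (auto split: if_splits)
  then obtain k where k: "(f ^^ k) x = x1"
    unfolding Pset_def by blast
  then have "k = 0"
    using * \<open>x \<in> Pset A f x1\<close> level_Pset[OF assms k] unfolding to_E_def by simp
  then show "x = x1"
    using k by simp
next
  assume "x = x1"
  then show "to_E x1 x = Inr 1"
    using assms level_Pset[of x1 x1 0] unfolding to_E_def by (simp add: Pset_self)
qed

definition E_emb :: "(nat \<Rightarrow> 'a) \<Rightarrow> (nat \<Rightarrow> 'a) \<Rightarrow> int + nat \<Rightarrow> 'a" where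
  "E_emb s t y = (case y of Inl k \<Rightarrow> zline f t k | Inr k \<Rightarrow> s (k - 1))"

lemma malg_hom_E_emb:
  assumes s: "\<forall>n. s n \<in> A \<and> f (s (Suc n)) = s n" and t: "\<forall>n. t n \<in> A \<and> f (t (Suc n)) = t n"
    and st: "t 0 = f (s 0)"
  shows "malg_hom E_car E_op A f (E_emb s t)"
  unfolding malg_hom_def
proof
  fix y assume "y \<in> E_car"
  then consider k where "y = Inl k" | k where "y = Inr k" "k = 1" | k where "y = Inr k" "k > 1"
    by (cases y) (force simp: E_car_def)+
  then show "E_emb s t y \<in> A \<and> E_emb s t (E_op y) = f (E_emb s t y)"
  proof cases
    case 1
    have "\<forall>n. t n \<in> A" "\<forall>n. f (t (Suc n)) = t n"
      using t by blast+
    then show ?thesis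
      using 1 zline_in[OF A_closed] zline_succ unfolding E_emb_def by simp
  next
    case 2
    then show ?thesis
      using s st unfolding E_emb_def zline_def by simp
  next
    case (3 k)
    then have "E_emb s t (E_op y) = s (k - 2)" "E_emb s t y = s (Suc (k - 2))"
      unfolding E_emb_def by (simp_all add: Suc_diff_Suc numeral_2_eq_2)
    then show ?thesis
      using s by simp
  qed
qed

lemma to_E_E_emb:
  assumes s: "\<forall>n. s n \<in> A \<and> f (s (Suc n)) = s n" and t: "\<forall>n. t n \<in> A \<and> f (t (Suc n)) = t n"
    and st: "t 0 = f (s 0)" and branch: "t 1 \<noteq> s 0" and "y \<in> E_car"
  shows "to_E (s 0) (E_emb s t y) = y"
proof (cases y)
  case (Inl k)
  have tA: "\<forall>n. t n \<in> A" and t_back: "\<forall>n. f (t (Suc n)) = t n" and s0: "s 0 \<in> A"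
    using s t by blast+
  have level: "level (f (s 0)) (zline f t k) = k"
    using level_zline[OF _ tA t_back, of "t 0" k] level_self[of "t 0"] f_in[OF s0] st by simp
  have "zline f t k \<notin> Pset A f (s 0)"
  proof
    assume "zline f t k \<in> Pset A f (s 0)"
    then obtain m where m: "(f ^^ m) (zline f t k) = s 0"
      unfolding Pset_def by blast
    then have "k = - int m - 1"
      using level level_Pset[OF s0 zline_in[OF A_closed tA] m] by simp
    then have "zline f t k = t (Suc m)"
      unfolding zline_def by (simp add: nat_add_distrib)
    moreover have "(f ^^ m) (t (Suc m)) = t 1"
      using funpow_backward_seq[of f "\<lambda>n. t (Suc n)" m] t by simp
    ultimately show False
      using m branch by simp
  qed
  then show ?thesis
    using level Inl unfolding to_E_def E_emb_def by simp
next
  case (Inr k)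
  then have "k \<ge> 1"
    using assms(5) unfolding E_car_def by auto
  have "(f ^^ (k - 1)) (s (k - 1)) = s 0"
    using funpow_backward_seq[of f s] s by simp
  then have "s (k - 1) \<in> Pset A f (s 0)" "level (f (s 0)) (s (k - 1)) = - int k"
    using level_Pset s \<open>k \<ge> 1\<close> unfolding Pset_def by auto
  then show ?thesis
    using Inr unfolding to_E_def E_emb_def by simp
qed

lemma in_R_E_if_branching:
  assumes u: "u1 \<in> inf_part A f" "u2 \<in> inf_part A f" "u1 \<noteq> u2" "f u1 = f u2"
  shows "in_R E_car E_op A f"
proof -
  obtain s where s: "s 0 = u1" "\<forall>n. s n \<in> inf_part A f \<and> f (s (Suc n)) = s n"
    using inf_part_backward_seq[OF u(1)] by blast
  obtain r where r: "r 0 = u2" "\<forall>n. r n \<in> inf_part A f \<and> f (r (Suc n)) = r n"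
    using inf_part_backward_seq[OF u(2)] by blast
  define t where "t = case_nat (f u1) r"
  have u1A: "u1 \<in> A"
    using u(1) inf_part_in_A by blast
  have s': "\<forall>n. s n \<in> A \<and> f (s (Suc n)) = s n"
    using s(2) inf_part_in_A by blast
  have t: "\<forall>n. t n \<in> A \<and> f (t (Suc n)) = t n"
    using r u(4) inf_part_in_A f_in[OF u1A] unfolding t_def by (auto split: nat.split)
  have "t 0 = f (s 0)" "t 1 \<noteq> s 0"
    using s(1) r(1) u(3) unfolding t_def by simp_all
  then show ?thesis
    using in_R_if_section[OF is_malg_E malg_hom_E_emb[OF s' t] malg_hom_to_E] to_E_E_emb[OF s' t]
      s(1) u1A by simp
qed

end

locale singleton_prime_part = connected_acyclic +
  fixes a :: 'a
  assumes a_in: "a \<in> A" and prime_part_eq: "prime_part A f = {a}"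
begin

abbreviation "Ainf \<equiv> inf_part A f"
abbreviation "Pa \<equiv> Pset A f a"
abbreviation "lev \<equiv> level (f a)"

lemma a_notin_inf: "a \<notin> Ainf" and f_a_in_inf: "f a \<in> Ainf"
  using prime_part_eq unfolding prime_part_def by auto

lemma inf_f: "x \<in> Ainf \<Longrightarrow> f x \<in> Ainf"
  using inf_part_f[OF A_closed] .

lemma Pa_in_A: "y \<in> Pa \<Longrightarrow> y \<in> A"
  unfolding Pset_def by blast

lemma a_in_Pa: "a \<in> Pa"
  using Pset_self[OF a_in] .

lemma Pa_f: "y \<in> Pa \<Longrightarrow> y \<noteq> a \<Longrightarrow> f y \<in> Pa"
  using Pset_f[OF A_closed] .

lemma inf_notin_Pa: "x \<in> Ainf \<Longrightarrow> x \<notin> Pa"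
  unfolding Pset_def using inf_part_funpow[OF A_closed] a_notin_inf by blast

text \<open>Every element outside the infinite part enters it through an element of A', that is,
  through a.\<close>

lemma A_diff_Pa: "A - Pa = Ainf"
proof
  show "Ainf \<subseteq> A - Pa"
    using inf_notin_Pa inf_part_in_A by blast
  show "A - Pa \<subseteq> Ainf"
  proof
    fix x assume x: "x \<in> A - Pa"
    show "x \<in> Ainf"
    proof (rule ccontr)
      assume "x \<notin> Ainf"
      obtain m n where "(f ^^ m) x = (f ^^ n) (f a)"
        using level_exists x f_in[OF a_in] by blast
      then have ex: "\<exists>k. (f ^^ k) x \<in> Ainf"
        using inf_part_funpow[OF A_closed f_a_in_inf] by metis
      define k where "k = (LEAST k. (f ^^ k) x \<in> Ainf)"
      have k: "(f ^^ k) x \<in> Ainf"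
        unfolding k_def using LeastI_ex[OF ex] .
      with \<open>x \<notin> Ainf\<close> obtain j where j: "k = Suc j"
        by (cases k) auto
      then have "(f ^^ j) x \<notin> Ainf"
        using not_less_Least[of j "\<lambda>k. (f ^^ k) x \<in> Ainf"] k_def by simp
      moreover have "f ((f ^^ j) x) \<in> Ainf"
        using k j by simp
      ultimately have "(f ^^ j) x \<in> prime_part A f"
        unfolding prime_part_def using funpow_in x by blast
      then have "(f ^^ j) x = a"
        using prime_part_eq by blast
      then show False
        using x unfolding Pset_def by blast
    qed
  qed
qed

lemma A_cases: "x \<in> A \<Longrightarrow> x \<notin> Ainf \<Longrightarrow> x \<in> Pa"
  using A_diff_Pa by blast

definition depth :: "'a \<Rightarrow> nat" where
  "depth y = (THE n. (f ^^ n) y = a)"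

lemma depth_unique:
  assumes "y \<in> Pa" "(f ^^ n) y = a"
  shows "depth y = n"
  unfolding depth_def
proof (rule the_equality)
  show "(f ^^ m) y = a \<Longrightarrow> m = n" for m
    using funpow_inj[OF Pa_in_A[OF assms(1)]] assms(2) by metis
qed (rule assms(2))

lemma funpow_depth:
  assumes "y \<in> Pa"
  shows "(f ^^ depth y) y = a"
proof -
  obtain n where "(f ^^ n) y = a"
    using assms unfolding Pset_def by blast
  then show ?thesis
    using depth_unique[OF assms] by simp
qed

lemma depth_eq_0_iff:
  assumes "y \<in> Pa"
  shows "depth y = 0 \<longleftrightarrow> y = a"
  using funpow_depth[OF assms] depth_unique[OF a_in_Pa, of 0] by auto

lemma depth_f:
  assumes "y \<in> Pa" "y \<noteq> a"
  shows "depth y = Suc (depth (f y))"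
proof -
  have "(f ^^ Suc (depth (f y))) y = a"
    using funpow_depth[OF Pa_f[OF assms]] by (simp add: funpow_swap1)
  then show ?thesis
    using depth_unique[OF assms(1)] by blast
qed

definition back_seq :: "nat \<Rightarrow> 'a" where
  "back_seq = (SOME s. s 0 = f a \<and> (\<forall>n. s n \<in> Ainf \<and> f (s (Suc n)) = s n))"

definition line :: "int \<Rightarrow> 'a" where
  "line = zline f back_seq"

lemma back_seq: "back_seq 0 = f a" "\<forall>n. back_seq n \<in> Ainf \<and> f (back_seq (Suc n)) = back_seq n"
proof -
  have "\<exists>s. s 0 = f a \<and> (\<forall>n. s n \<in> Ainf \<and> f (s (Suc n)) = s n)"
    using inf_part_backward_seq[OF f_a_in_inf] by metis
  then have "back_seq 0 = f a \<and> (\<forall>n. back_seq n \<in> Ainf \<and> f (back_seq (Suc n)) = back_seq n)"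
    unfolding back_seq_def by (rule someI_ex)
  then show "back_seq 0 = f a" "\<forall>n. back_seq n \<in> Ainf \<and> f (back_seq (Suc n)) = back_seq n"
    by blast+
qed

lemma line_in_inf: "line k \<in> Ainf"
proof -
  have "\<forall>z\<in>Ainf. f z \<in> Ainf"
    using inf_f by blast
  then show ?thesis
    unfolding line_def using zline_in back_seq(2) by blast
qed

lemma line_succ: "line (k + 1) = f (line k)"
  unfolding line_def using zline_succ back_seq(2) by blast

lemma line_0: "line 0 = f a"
  unfolding line_def zline_def using back_seq(1) by simp

lemma lev_line: "lev (line k) = k"
proof -
  have "\<forall>n. back_seq n \<in> A"
    using back_seq(2) inf_part_in_A by blast
  then show ?thesis
    unfolding line_def
    using level_zline[OF f_in[OF a_in]] back_seq level_self[OF f_in[OF a_in]] by simp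
qed

lemma inj_line: "inj line"
  by (metis injI lev_line)

lemma line_iso_Z: "malg_iso (range line) f (UNIV :: int set) Z_op"
  unfolding malg_iso_def
proof (intro exI[of _ lev] conjI)
  show "bij_betw lev (range line) UNIV"
    by (rule bij_betw_byWitness[of _ line]) (auto simp: lev_line)
  show "\<forall>x\<in>range line. lev (f x) = Z_op (lev x)"
    using level_f[OF f_in[OF a_in]] line_in_inf inf_part_in_A unfolding Z_op_def by blast
qed

lemma inf_eq_range_line:
  assumes "inj_on f Ainf"
  shows "Ainf = range line"
proof
  show "range line \<subseteq> Ainf"
    using line_in_inf by blast
  show "Ainf \<subseteq> range line"
  proof
    fix x assume x: "x \<in> Ainf"
    have inj: "inj_on (f ^^ k) Ainf" for k
      using inj_on_funpow[OF assms] inf_f by blast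
    have "lev x = lev (line (lev x))"
      by (simp add: lev_line)
    then obtain k where "(f ^^ k) x = (f ^^ k) (line (lev x))"
      using level_common_iterate[OF f_in[OF a_in] inf_part_in_A[OF x] inf_part_in_A[OF line_in_inf]]
      by blast
    then have "x = line (lev x)"
      using inj x line_in_inf unfolding inj_on_def by blast
    then show "x \<in> range line"
      by blast
  qed
qed

lemma branching_if_not_Z:
  assumes "\<not> malg_iso (A - Pa) f (UNIV :: int set) Z_op"
  obtains u1 u2 where "u1 \<in> Ainf" "u2 \<in> Ainf" "u1 \<noteq> u2" "f u1 = f u2"
proof -
  have "\<not> inj_on f Ainf"
    using assms inf_eq_range_line line_iso_Z A_diff_Pa by metis
  then show ?thesis
    using that unfolding inj_on_def by blast
qed

section \<open>The retract B\<close>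

abbreviation "bisim \<equiv> bisimilar A f"

definition rep :: "'a \<Rightarrow> 'a \<Rightarrow> 'a" where
  "rep z c = (SOME c'. c' \<in> A \<and> f c' = z \<and> bisim c' c)"

lemma rep:
  assumes "\<exists>c'\<in>A. f c' = z \<and> bisim c' c"
  shows "rep z c \<in> A" "f (rep z c) = z" "bisim (rep z c) c"
proof -
  have "rep z c \<in> A \<and> f (rep z c) = z \<and> bisim (rep z c) c"
    unfolding rep_def by (rule someI_ex) (use assms in blast)
  then show "rep z c \<in> A" "f (rep z c) = z" "bisim (rep z c) c"
    by blast+
qed

lemma rep_cong:
  assumes "bisim c d"
  shows "rep z c = rep z d"
proof -
  have "bisim c' c \<longleftrightarrow> bisim c' d" for c'
    using assms bisimilar_trans bisimilar_sym by metis
  then show ?thesis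
    unfolding rep_def by simp
qed

lemma rep_rep:
  assumes "c \<in> A" "f c = z"
  shows "rep z (rep z c) = rep z c"
  using rep(3)[of z c] assms bisimilar_refl rep_cong by metis

primrec canon_at :: "nat \<Rightarrow> 'a \<Rightarrow> 'a" where
  "canon_at 0 y = a"
| "canon_at (Suc n) y = rep (canon_at n (f y)) y"

definition canon :: "'a \<Rightarrow> 'a" where
  "canon y = canon_at (depth y) y"

lemma canon_at:
  assumes "y \<in> Pa" "depth y = n"
  shows "canon_at n y \<in> A \<and> (f ^^ n) (canon_at n y) = a \<and> bisim (canon_at n y) y"
  using assms
proof (induction n arbitrary: y)
  case 0
  then show ?case
    using depth_eq_0_iff a_in bisimilar_refl by simp
next
  case (Suc n)
  then have "y \<noteq> a"
    using depth_eq_0_iff by force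
  then have y: "f y \<in> Pa" "depth (f y) = n"
    using depth_f Pa_f Suc.prems by auto
  then have IH: "canon_at n (f y) \<in> A" "(f ^^ n) (canon_at n (f y)) = a"
    "bisim (canon_at n (f y)) (f y)"
    using Suc.IH by blast+
  then have "\<exists>c'\<in>A. f c' = canon_at n (f y) \<and> bisim c' y"
    using bisimilar_preimage'[OF IH(3)] Pa_in_A[OF Suc.prems(1)] by blast
  then show ?case
    using rep[of "canon_at n (f y)" y] IH(2) by (simp add: funpow_swap1)
qed

lemma canon_in_Pa: "y \<in> Pa \<Longrightarrow> canon y \<in> Pa"
  and depth_canon: "y \<in> Pa \<Longrightarrow> depth (canon y) = depth y"
  and bisim_canon: "y \<in> Pa \<Longrightarrow> bisim (canon y) y"
  using canon_at[of y "depth y"] depth_unique unfolding canon_def Pset_def by auto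

lemma canon_a: "canon a = a"
  using depth_eq_0_iff[OF a_in_Pa] unfolding canon_def by simp

lemma canon_step:
  assumes "y \<in> Pa" "y \<noteq> a"
  shows "canon y = rep (canon (f y)) y"
  using depth_f[OF assms] unfolding canon_def by simp

lemma f_canon:
  assumes "y \<in> Pa" "y \<noteq> a"
  shows "f (canon y) = canon (f y)"
proof -
  have "\<exists>c'\<in>A. f c' = canon (f y) \<and> bisim c' y"
    using bisimilar_preimage'[OF bisim_canon[OF Pa_f[OF assms]]] Pa_in_A[OF assms(1)] by blast
  then show ?thesis
    using rep(2) canon_step[OF assms] by simp
qed

lemma canon_idem:
  assumes "y \<in> Pa"
  shows "canon (canon y) = canon y"
proof -
  have "\<forall>y\<in>Pa. depth y = n \<longrightarrow> canon (canon y) = canon y" for n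
  proof (induction n)
    case 0
    then show ?case
      using depth_eq_0_iff canon_a by auto
  next
    case (Suc n)
    show ?case
    proof (intro ballI impI)
      fix y assume y: "y \<in> Pa" "depth y = Suc n"
      then have "y \<noteq> a" "canon y \<noteq> a"
        using depth_eq_0_iff depth_canon canon_in_Pa by force+
      then have "canon (canon y) = rep (canon (canon (f y))) (canon y)"
        using canon_step canon_in_Pa f_canon y(1) by metis
      also have "\<dots> = rep (canon (f y)) (canon y)"
        using Suc.IH Pa_f depth_f y \<open>y \<noteq> a\<close> by simp
      also have "\<dots> = rep (canon (f y)) y"
        using rep_cong[OF bisim_canon[OF y(1)]] .
      also have "\<dots> = canon y"
        using canon_step[OF y(1) \<open>y \<noteq> a\<close>] by simp
      finally show "canon (canon y) = canon y" .
    qed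
  qed
  then show ?thesis
    using assms by blast
qed

definition canon_tree :: "'a set" where
  "canon_tree = canon ` Pa"

lemma canon_tree_iff: "t \<in> canon_tree \<longleftrightarrow> t \<in> Pa \<and> canon t = t"
  unfolding canon_tree_def using canon_in_Pa canon_idem by force

lemma a_in_canon_tree: "a \<in> canon_tree"
  using canon_tree_iff a_in_Pa canon_a by blast

lemma canon_tree_f: "t \<in> canon_tree \<Longrightarrow> t \<noteq> a \<Longrightarrow> f t \<in> canon_tree"
  using canon_tree_iff Pa_f f_canon by metis

lemma rep_canon_tree_self:
  assumes "t \<in> canon_tree" "t \<noteq> a"
  shows "rep (f t) t = t"
  using canon_step[of t] f_canon[of t] assms unfolding canon_tree_iff by metis

lemma rep_in_canon_tree:
  assumes "t \<in> canon_tree" "c \<in> A" "f c = t"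
  shows "rep t c \<in> canon_tree" "f (rep t c) = t" "bisim (rep t c) c"
proof -
  have ex: "\<exists>c'\<in>A. f c' = t \<and> bisim c' c"
    using assms(2,3) bisimilar_refl[of A f c] by blast
  show r: "f (rep t c) = t" "bisim (rep t c) c"
    using rep[OF ex] by blast+
  have t: "t \<in> Pa" "canon t = t"
    using assms(1) canon_tree_iff by blast+
  have "rep t c \<in> Pa"
    using Pset_preimage[OF t(1) rep(1)[OF ex] r(1)] .
  moreover have "rep t c \<noteq> a"
    using r(1) t(1) f_a_in_inf inf_notin_Pa by auto
  ultimately have "canon (rep t c) = rep t (rep t c)"
    using canon_step r(1) t(2) by simp
  then show "rep t c \<in> canon_tree"
    using rep_rep[OF assms(2,3)] \<open>rep t c \<in> Pa\<close> canon_tree_iff by simp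
qed

definition B :: "'a set" where
  "B = range line \<union> canon_tree"

definition to_B :: "'a \<Rightarrow> 'a" where
  "to_B x = (if x \<in> Ainf then line (lev x) else canon x)"

lemma canon_tree_subset_Pa: "canon_tree \<subseteq> Pa"
  using canon_tree_iff by blast

lemma line_notin_canon_tree: "line k \<notin> canon_tree"
  using line_in_inf inf_notin_Pa canon_tree_subset_Pa by blast

lemma B_subset: "B \<subseteq> A"
  unfolding B_def using line_in_inf inf_part_in_A canon_tree_subset_Pa Pa_in_A by blast

lemma a_in_B: "a \<in> B"
  unfolding B_def using a_in_canon_tree by blast

lemma B_closed: "\<forall>x\<in>B. f x \<in> B"
proof
  fix x assume "x \<in> B"
  then consider k where "x = line k" | "x = a" | "x \<in> canon_tree" "x \<noteq> a"
    unfolding B_def by blast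
  then show "f x \<in> B"
    by cases (auto simp: B_def canon_tree_f line_succ[symmetric] line_0[symmetric])
qed

lemma is_malg_B: "is_malg B f"
  using a_in_B B_closed unfolding is_malg_def by blast

lemma to_B_in_B: "x \<in> A \<Longrightarrow> to_B x \<in> B"
  unfolding to_B_def B_def canon_tree_def using A_cases by auto

lemma to_B_id: "x \<in> B \<Longrightarrow> to_B x = x"
  unfolding to_B_def B_def using lev_line line_in_inf canon_tree_iff inf_notin_Pa by auto

lemma to_B_f:
  assumes "x \<in> A"
  shows "to_B (f x) = f (to_B x)"
proof (cases "x \<in> Ainf")
  case True
  then show ?thesis
    unfolding to_B_def using inf_f level_f f_in a_in inf_part_in_A line_succ by simp
next
  case False
  then have x: "x \<in> Pa"
    using A_cases assms by blast
  show ?thesis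
  proof (cases "x = a")
    case True
    then show ?thesis
      using to_B_id a_in_B B_closed by simp
  next
    case False
    then have "f x \<notin> Ainf"
      using Pa_f x inf_notin_Pa by blast
    then show ?thesis
      unfolding to_B_def using \<open>x \<notin> Ainf\<close> f_canon x False by simp
  qed
qed

lemma in_R_B: "in_R B f A f"
proof (rule in_R_if_section[OF is_malg_B])
  show "malg_hom B f A f id"
    using B_subset B_closed unfolding malg_hom_def by auto
  show "malg_hom A f B f to_B"
    using to_B_in_B to_B_f unfolding malg_hom_def by blast
  show "\<forall>y\<in>B. to_B (id y) = y"
    using to_B_id by simp
qed

lemma acyclic_B: "\<not> has_cycle B f"
  using has_cycle_mono[OF B_subset] acyclic by blast

lemma canon_tree_eq_B_inter_Pa: "canon_tree = B \<inter> Pa"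
  unfolding B_def using canon_tree_subset_Pa line_in_inf inf_notin_Pa by blast

lemma bisimilar_B_imp_bisim:
  assumes "x \<in> canon_tree" "y \<in> canon_tree" "bisimilar B f x y"
  shows "bisim x y"
proof (rule bisimilar_lift[OF B_subset _ _ _ assms])
  show "canon_tree \<subseteq> B"
    unfolding B_def by blast
  show "\<forall>t\<in>canon_tree. \<forall>c\<in>B. f c = t \<longrightarrow> c \<in> canon_tree"
  proof (intro ballI impI)
    fix t c assume "t \<in> canon_tree" "c \<in> B" "f c = t"
    then have "c \<in> Pa"
      using Pset_preimage[of t A f a c] B_subset canon_tree_subset_Pa by blast
    then show "c \<in> canon_tree"
      using \<open>c \<in> B\<close> canon_tree_eq_B_inter_Pa by blast
  qed
  show "\<forall>t\<in>canon_tree. \<forall>c\<in>A. f c = t \<longrightarrow> (\<exists>c'\<in>B. f c' = t \<and> bisim c c')"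
  proof (intro ballI impI)
    fix t c assume t: "t \<in> canon_tree" "c \<in> A" "f c = t"
    show "\<exists>c'\<in>B. f c' = t \<and> bisim c c'"
      using rep_in_canon_tree[OF t] bisimilar_sym[of A f "rep t c" c] unfolding B_def by blast
  qed
qed

lemma canon_tree_siblings_eq:
  assumes "x \<in> canon_tree" "y \<in> canon_tree" "f x = f y" "bisim x y"
  shows "x = y"
proof (cases "x = a \<or> y = a")
  case True
  then have "f x \<in> Ainf" "f y \<in> Ainf"
    using assms(3) f_a_in_inf by auto
  moreover have "x \<in> Pa" "y \<in> Pa"
    using assms(1,2) canon_tree_subset_Pa by blast+
  ultimately have "x \<in> prime_part A f" "y \<in> prime_part A f"
    unfolding prime_part_def using inf_notin_Pa Pa_in_A by blast+
  then show ?thesis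
    using prime_part_eq by simp
next
  case False
  then show ?thesis
    using rep_canon_tree_self assms rep_cong by metis
qed

lemma B_siblings_eq:
  assumes "x \<in> B" "y \<in> B" "f x = f y" "partial_iso (Pset B f x) (Pset B f y) f"
    and "x \<in> canon_tree \<longleftrightarrow> y \<in> canon_tree"
  shows "x = y"
proof (cases "x \<in> canon_tree")
  case True
  have "bisimilar B f x y"
    using partial_iso_Pset_imp_bisimilar[OF B_closed acyclic_B assms(1,2,4)] .
  then show ?thesis
    using canon_tree_siblings_eq bisimilar_B_imp_bisim True assms(3,5) by blast
next
  case False
  then obtain k l where "x = line k" "y = line l"
    using assms(1,2,5) unfolding B_def by blast
  then show ?thesis
    using assms(3) inj_line line_succ unfolding inj_def by (metis add_right_cancel)
qed

lemma star_cond_B: "star_cond B f"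
  unfolding star_cond_def
proof (intro ballI impI)
  fix x1 x2 x3 assume x: "x1 \<in> B" "x2 \<in> B" "x3 \<in> B"
    and H: "f x1 = f x2 \<and> f x2 = f x3 \<and> partial_iso (Pset B f x1) (Pset B f x2) f \<and>
      partial_iso (Pset B f x1) (Pset B f x3) f \<and> partial_iso (Pset B f x2) (Pset B f x3) f"
  \<comment> \<open>two of the three lie on the same side of B = range line \<union> canon_tree\<close>
  consider "x1 \<in> canon_tree \<longleftrightarrow> x2 \<in> canon_tree" | "x1 \<in> canon_tree \<longleftrightarrow> x3 \<in> canon_tree"
    | "x2 \<in> canon_tree \<longleftrightarrow> x3 \<in> canon_tree"
    by blast
  then have "x1 = x2 \<or> x1 = x3 \<or> x2 = x3"
    using B_siblings_eq x H by cases metis+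
  then show "card {x1, x2, x3} \<le> 2"
    by (auto simp: card_insert_if)
qed

lemma inf_part_B: "inf_part B f = range line"
proof
  show "inf_part B f \<subseteq> range line"
  proof
    fix x assume "x \<in> inf_part B f"
    then have "x \<in> B" "x \<in> Ainf"
      using inf_part_subset[of B f] inf_part_mono[OF B_subset, of f] by blast+
    then show "x \<in> range line"
      unfolding B_def using canon_tree_subset_Pa inf_notin_Pa by blast
  qed
  show "range line \<subseteq> inf_part B f"
  proof
    fix x assume "x \<in> range line"
    then obtain k where "x = line k"
      by blast
    then show "x \<in> inf_part B f"
      by (intro inf_partI[of "\<lambda>n. line (k - int n)"]) (auto simp: B_def line_succ[symmetric])
  qed
qed

lemma prime_part_B: "prime_part B f = {a}"
proof -
  have sub: "prime_part B f \<subseteq> prime_part A f"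
  proof
    fix x assume "x \<in> prime_part B f"
    then have x: "x \<in> B" "x \<notin> range line" "f x \<in> range line"
      unfolding prime_part_def inf_part_B by blast+
    then have "x \<in> Pa"
      unfolding B_def using canon_tree_subset_Pa by blast
    then have "x \<in> A" "x \<notin> Ainf" "f x \<in> Ainf"
      using Pa_in_A inf_notin_Pa x(3) line_in_inf by auto
    then show "x \<in> prime_part A f"
      unfolding prime_part_def by blast
  qed
  have "a \<notin> range line"
    using a_notin_inf line_in_inf by (metis rangeE)
  moreover have "f a \<in> range line"
    by (metis line_0 rangeI)
  ultimately have "a \<in> prime_part B f"
    unfolding prime_part_def inf_part_B using a_in_B by blast
  then show ?thesis
    using sub prime_part_eq by blast
qed

lemma Pset_B_a: "Pset B f a = canon_tree"
  unfolding canon_tree_eq_B_inter_Pa Pset_def using B_subset by blast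

lemma in_S1_B: "in_S1 B f"
  unfolding in_S1_def in_Ustar_c_def
proof (intro conjI bexI[of _ a])
  show "connected_malg B f"
    using connected B_subset unfolding connected_malg_def by (meson subsetD)
  have "B - Pset B f a = range line"
    unfolding Pset_B_a by (auto simp: B_def line_notin_canon_tree)
  then show "in_S0 (B - Pset B f a) f"
    unfolding in_S0_def using line_iso_Z by simp
qed (use is_malg_B star_cond_B prime_part_B a_in_B in auto)

section \<open>Embedding A into a product of B and copies of E\<close>

text \<open>The statement fixes the index type to 'a set: the index {} carries the factor B (via Inl)
  and each {x1} with x1 \<in> A a copy of E (via Inr).\<close>

definition index :: "'a set set" where
  "index = insert {} ((\<lambda>x. {x}) ` A)"

definition factor :: "'a set \<Rightarrow> ('a + (int + nat)) set \<times> ('a + (int + nat) \<Rightarrow> 'a + (int + nat))" where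
  "factor i = (if i = {} then (Inl ` B, map_sum f id) else (Inr ` E_car, map_sum id E_op))"

abbreviation "P \<equiv> prod_carrier index factor"
abbreviation "F \<equiv> prod_op index factor"

lemma factor_in_B_E:
  assumes "i \<in> index"
  shows "is_malg (fst (factor i)) (snd (factor i)) \<and>
    (malg_iso (fst (factor i)) (snd (factor i)) B f \<or> malg_iso (fst (factor i)) (snd (factor i)) E_car E_op)"
proof (cases "i = {}")
  case True
  have "malg_iso (Inl ` B) (map_sum f id) B f"
    using malg_iso_inj_image[of projl "Inl ` B" "map_sum f id" f] by (simp add: inj_on_def image_image)
  then show ?thesis
    using True is_malg_B unfolding factor_def is_malg_def by auto
next
  case False
  have "malg_iso (Inr ` E_car) (map_sum id E_op) E_car E_op"
    using malg_iso_inj_image[of projr "Inr ` E_car" "map_sum id E_op" E_op]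
    by (simp add: inj_on_def image_image)
  then show ?thesis
    using False is_malg_E unfolding factor_def is_malg_def by auto
qed

lemma F_closed: "p \<in> P \<Longrightarrow> F p \<in> P"
  unfolding prod_carrier_def prod_op_def
  using factor_in_B_E unfolding is_malg_def by auto

definition emb :: "'a \<Rightarrow> 'a set \<Rightarrow> 'a + (int + nat)" where
  "emb x = restrict (\<lambda>i. if i = {} then Inl (to_B x) else Inr (to_E (the_elem i) x)) index"

lemma malg_hom_emb: "malg_hom A f P F emb"
  unfolding malg_hom_def
proof (intro ballI conjI)
  fix x assume x: "x \<in> A"
  show "emb x \<in> P"
    using x to_B_in_B to_E_in_E
    unfolding emb_def prod_carrier_def factor_def index_def by auto
  show "emb (f x) = F (emb x)"
    unfolding emb_def prod_op_def
    by (rule restrict_ext) (use x to_B_f to_E_f in \<open>auto simp: index_def factor_def\<close>)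
qed

lemma inj_on_emb: "inj_on emb A"
proof
  fix x y assume x: "x \<in> A" and y: "y \<in> A" and eq: "emb x = emb y"
  have "{y} \<in> index"
    using y unfolding index_def by blast
  then have "emb x {y} = Inr (to_E y x)" "emb y {y} = Inr (to_E y y)"
    unfolding emb_def by simp_all
  then have "to_E y x = Inr 1"
    using eq to_E_eq_Inr_1_iff[OF y y] by simp
  then show "x = y"
    using to_E_eq_Inr_1_iff[OF y x] by blast
qed

definition B_coord :: "('a set \<Rightarrow> 'a + (int + nat)) \<Rightarrow> 'a" where
  "B_coord p = projl (p {})"

lemma B_coord:
  assumes "p \<in> P"
  shows "p {} = Inl (B_coord p)" "B_coord p \<in> B"
proof -
  have "p {} \<in> Inl ` B"
    using PiE_mem[OF assms[unfolded prod_carrier_def], of "{}"]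
    unfolding index_def factor_def by simp
  then show "p {} = Inl (B_coord p)" "B_coord p \<in> B"
    unfolding B_coord_def by auto
qed

lemma B_coord_F:
  assumes "p \<in> P"
  shows "B_coord (F p) = f (B_coord p)"
proof -
  have "F p {} = map_sum f id (p {})"
    unfolding prod_op_def factor_def index_def by simp
  also have "\<dots> = Inl (f (B_coord p))"
    using B_coord(1)[OF assms] by (metis map_sum.simps(1))
  finally show ?thesis
    unfolding B_coord_def by (metis sum.sel(1))
qed

lemma B_coord_emb: "B_coord (emb x) = to_B x"
  unfolding B_coord_def emb_def index_def by simp

text \<open>The left inverse of emb: follow p forward until it meets emb ` A and walk the same number
  of steps back in A, choosing preimages in the infinite part or bisimilar to the B-coordinate
  of p. Points that never meet emb ` A go to the line, by the level of their B-coordinate.\<close>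

definition pull_step :: "'a \<Rightarrow> ('a set \<Rightarrow> 'a + (int + nat)) \<Rightarrow> 'a" where
  "pull_step y p = (SOME c. c \<in> A \<and> f c = y \<and> (c \<in> Ainf \<or> bisim c (B_coord p)))"

primrec pull :: "nat \<Rightarrow> ('a set \<Rightarrow> 'a + (int + nat)) \<Rightarrow> 'a" where
  "pull 0 p = the_inv_into A emb p"
| "pull (Suc n) p = pull_step (pull n (F p)) p"

lemma pull_step:
  assumes "p \<in> P" "y \<in> A" "y \<in> Ainf \<or> bisim y (B_coord (F p))"
  shows "pull_step y p \<in> A \<and> f (pull_step y p) = y \<and>
    (pull_step y p \<in> Ainf \<or> bisim (pull_step y p) (B_coord p))"
proof -
  have "\<exists>c. c \<in> A \<and> f c = y \<and> (c \<in> Ainf \<or> bisim c (B_coord p))"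
  proof (cases "y \<in> Ainf")
    case True
    then show ?thesis
      using inf_part_preimage[of y A f] inf_part_in_A by blast
  next
    case False
    then have "bisim y (f (B_coord p))"
      using assms B_coord_F by simp
    moreover have "B_coord p \<in> A"
      using B_coord(2)[OF assms(1)] B_subset by blast
    ultimately show ?thesis
      using bisimilar_preimage'[of A f y "f (B_coord p)" "B_coord p"] by blast
  qed
  then show ?thesis
    unfolding pull_step_def by (rule someI_ex)
qed

lemma pull_invariant:
  assumes "p \<in> P" "(F ^^ n) p \<in> emb ` A"
  shows "pull n p \<in> A \<and> (pull n p \<in> Ainf \<or> bisim (pull n p) (B_coord p))"
  using assms
proof (induction n arbitrary: p)
  case 0
  then obtain x where x: "x \<in> A" "p = emb x"
    by auto
  then have "pull 0 p = x"
    using the_inv_into_f_f[OF inj_on_emb] by simp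
  moreover have "x \<notin> Ainf \<Longrightarrow> bisim x (to_B x)"
    unfolding to_B_def using A_cases[OF x(1)] bisim_canon bisimilar_sym[of A f "canon x" x] by simp
  ultimately show ?case
    using x B_coord_emb by auto
next
  case (Suc n)
  have "(F ^^ n) (F p) \<in> emb ` A"
    using Suc.prems(2) by (simp add: funpow_swap1)
  then show ?case
    using Suc.IH[OF F_closed[OF Suc.prems(1)]] pull_step[OF Suc.prems(1)] by simp
qed

lemma f_pull_Suc:
  assumes "p \<in> P" "(F ^^ Suc n) p \<in> emb ` A"
  shows "f (pull (Suc n) p) = pull n (F p)"
proof -
  have "(F ^^ n) (F p) \<in> emb ` A"
    using assms(2) by (simp add: funpow_swap1)
  then show ?thesis
    using pull_invariant[OF F_closed[OF assms(1)]] pull_step[OF assms(1)] by simp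
qed

definition pullback :: "('a set \<Rightarrow> 'a + (int + nat)) \<Rightarrow> 'a" where
  "pullback p = (if \<exists>m. (F ^^ m) p \<in> emb ` A then pull (LEAST m. (F ^^ m) p \<in> emb ` A) p
    else line (lev (B_coord p)))"

lemma pullback_emb:
  assumes "x \<in> A"
  shows "pullback (emb x) = x"
proof -
  have "\<exists>m. (F ^^ m) (emb x) \<in> emb ` A"
    by (rule exI[of _ 0]) (use assms in simp)
  moreover have "(LEAST m. (F ^^ m) (emb x) \<in> emb ` A) = 0"
    using assms by (intro Least_eq_0) simp
  ultimately have "pullback (emb x) = pull 0 (emb x)"
    unfolding pullback_def by simp
  then show ?thesis
    using the_inv_into_f_f[OF inj_on_emb assms] by simp
qed

lemma pullback_in_A: "p \<in> P \<Longrightarrow> pullback p \<in> A"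
  unfolding pullback_def using pull_invariant LeastI_ex[of "\<lambda>m. (F ^^ m) p \<in> emb ` A"]
    line_in_inf inf_part_in_A by auto

lemma pullback_F:
  assumes p: "p \<in> P"
  shows "pullback (F p) = f (pullback p)"
proof (cases "\<exists>m. (F ^^ m) p \<in> emb ` A")
  case reaches: True
  show ?thesis
  proof (cases "p \<in> emb ` A")
    case True
    then obtain x where "x \<in> A" "p = emb x"
      by blast
    then show ?thesis
      using pullback_emb malg_hom_emb f_in unfolding malg_hom_def by metis
  next
    case False
    define n where "n = (LEAST m. (F ^^ m) (F p) \<in> emb ` A)"
    obtain m0 where "(F ^^ m0) p \<in> emb ` A"
      using reaches by blast
    then have "(LEAST m. (F ^^ m) p \<in> emb ` A) = Suc n"
      using Least_Suc[of "\<lambda>m. (F ^^ m) p \<in> emb ` A"] False unfolding n_def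
      by (simp add: funpow_swap1)
    moreover have "(F ^^ Suc n) p \<in> emb ` A"
      using calculation LeastI_ex[OF reaches] by metis
    moreover have "\<exists>m. (F ^^ m) (F p) \<in> emb ` A"
      using calculation(2) by (auto simp: funpow_swap1)
    ultimately show ?thesis
      unfolding pullback_def n_def[symmetric] using reaches f_pull_Suc[OF p] by simp
  qed
next
  case False
  then have "\<not> (\<exists>m. (F ^^ m) (F p) \<in> emb ` A)"
    by (metis comp_apply funpow_Suc_right)
  then show ?thesis
    unfolding pullback_def using False B_coord_F[OF p] B_coord(2)[OF p] B_subset
      level_f[OF f_in[OF a_in]] line_succ by auto
qed

lemma A_in_V_B_E:
  "in_V (\<lambda>(S :: ('a + (int + nat)) set) h. malg_iso S h B f \<or> malg_iso S h E_car E_op)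
     TYPE('a set) A f"
proof -
  have "malg_hom P F A f pullback"
    unfolding malg_hom_def using pullback_in_A pullback_F by blast
  then have "in_R A f P F"
    using in_R_if_section[OF malg malg_hom_emb] pullback_emb by blast
  then show ?thesis
    unfolding in_V_def using factor_in_B_E by blast
qed

end

theorem lemma4p5:
  fixes A :: "'a set" and f :: "'a \<Rightarrow> 'a" and a :: 'a
  assumes "is_malg A f"
    and "connected_malg A f"
    and "a \<in> A"
    and "prime_part A f = {a}"
    and "\<not> has_cycle A f"
    and "\<not> malg_iso (A - Pset A f a) f (UNIV :: int set) Z_op"
  shows "\<exists>(B :: 'a set) (g :: 'a \<Rightarrow> 'a).
     in_R B g A f \<and> in_S1 B g \<and>
     in_V (\<lambda>(S :: 'a set) h. malg_iso S h A f) TYPE('a set) B g \<and>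
     in_V (\<lambda>(S :: 'a set) h. malg_iso S h A f) TYPE('a set) E_car E_op \<and>
     in_V (\<lambda>(S :: ('a + (int + nat)) set) h. malg_iso S h B g \<or> malg_iso S h E_car E_op)
          TYPE('a set) A f"
proof -
  interpret singleton_prime_part A f a
    using assms(1-5) by unfold_locales
  obtain u1 u2 where "u1 \<in> Ainf" "u2 \<in> Ainf" "u1 \<noteq> u2" "f u1 = f u2"
    using branching_if_not_Z assms(6) by blast
  then have "in_R E_car E_op A f"
    by (rule in_R_E_if_branching)
  then show ?thesis
    by (intro exI[of _ B] exI[of _ f] conjI in_R_B in_S1_B A_in_V_B_E
        in_R_imp_in_V[OF assms(1)] is_malg_B is_malg_E)
qed

end
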